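(* Let $K \ge 1$ be the number of groups, let $c_1,\dots,c_K>0$ be per-sample costs, let $B>0$ be a budget, and let $s>0$ be a step size. For each group $k$, let $M_k:\mathbb{R}_+^K\to\mathbb{R}$ be a (differentiable) learning curve that is concave and increasing, and let the utility of an allocation $\vec n=(n_1,\dots,n_K)\in\mathbb{R}_+^K$ be linear in the group-level performances: $U(\vec n)=\sum_{k=1}^K a_k M_k(\vec n)$ with weights $a_k\ge 0$. Suppose the partial derivatives of the learning curves have no cross-group effects, i.e. for every $j\in\{1,\dots,K\}$ and all $\vec p,\vec q\in\mathbb{R}_+^K$ with $p_j=q_j$, $$\frac{\partial M_k(\vec p)}{\partial n_j}=\frac{\partial M_k(\vec q)}{\partial n_j}\quad\text{for all }1\le k\le K.$$ Consider the greedy algorithm: initialize $\vec n=0$; while $\sum_{k=1}^K c_k n_k< B$, choose $$i^*\in\operatorname{argmax}_{1\le i\le K}\ \sum_{k=1}^K a_k M_k\!\left(\vec n+\tfrac{s}{c_i}\mathbf{1}_i\right),$$ where $\mathbf{1}_i$ is the $i$-th standard basis vector, and update $n_{i^*}\leftarrow n_{i^*}+\tfrac{s}{c_{i^*}}$. Then the allocation produced by the greedy algorithm maximizes $U$ over all feasible allocations $\vec n$ (i.e. those with $\sum_{k=1}^K c_k n_k\le B$) in which each $n_k$ is a nonnegative integer multiple of $\tfrac{s}{c_k}$.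
   Context: A model builder allocates a data-collection budget $B$ across $K$ groups; an allocation $\vec n\in\mathbb{R}_+^K$ specifies how many training samples are collected from each group, and collecting one sample from group $k$ costs $c_k$, so the budget constraint is $\sum_k c_k n_k\le B$. The learning curve $M_k(\vec n)$ is the expected model performance on group $k$ when the model is trained on a dataset with allocation $\vec n$. Each step of the greedy algorithm spends $s$ units of budget, buying $s/c_i$ samples from the chosen group $i$. *)

theory Defs
  imports "HOL-Analysis.Analysis"
begin

text \<open>The nonnegative orthant R_+^K, with K = CARD('n).\<close>
definition nonneg_orthant :: "(real ^ 'n) set" where
  "nonneg_orthant = {x. \<forall>i. 0 \<le> x $ i}"

text \<open>Partial derivative of f in direction j at p, for f defined on the nonnegative orthant
  (one-sided at the boundary: derivative within the orthant).\<close>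
definition partial_deriv :: "(real ^ 'n \<Rightarrow> real) \<Rightarrow> 'n \<Rightarrow> real ^ 'n \<Rightarrow> real" where
  "partial_deriv f j p = frechet_derivative f (at p within nonneg_orthant) (axis j 1)"

definition alloc_cost :: "('n::finite \<Rightarrow> real) \<Rightarrow> real ^ 'n \<Rightarrow> real" where
  "alloc_cost c n = (\<Sum>k\<in>UNIV. c k * n $ k)"

definition utility :: "('n::finite \<Rightarrow> real) \<Rightarrow> ('n \<Rightarrow> real ^ 'n \<Rightarrow> real) \<Rightarrow> real ^ 'n \<Rightarrow> real" where
  "utility a M n = (\<Sum>k\<in>UNIV. a k * M k n)"

definition greedy_step :: "real \<Rightarrow> ('n \<Rightarrow> real) \<Rightarrow> real ^ 'n \<Rightarrow> 'n \<Rightarrow> real ^ 'n" where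
  "greedy_step s c n i = n + (s / c i) *\<^sub>R axis i 1"

end

theory Submission
  imports Defs
begin

text \<open>
  By induction on t, the greedy allocation after t steps maximizes U among grid allocations
  of cost t s.  Let n be a grid allocation of cost (t + 1) s.  Some group j has n_j at least one
  step ahead of the greedy allocation x, so removing one step from group j gives a grid
  allocation n' of cost t s, hence U n' <= U x.  The gain U n - U n' of that step is an
  increment of U along the j-th axis.  As the partial derivatives in direction j depend only on
  the j-th coordinate, such increments depend only on the j-th coordinate of the base point, so
  the gain equals the same increment taken at x + (n'_j - x_j) e_j; by concavity it is at most
  the increment at x, which the greedy choice dominates.  Finally, monotonicity lets every
  feasible grid allocation be padded up to the cost of the greedy output.
\<close>

lemma nonneg_orthant_add_axis:
  assumes "x \<in> nonneg_orthant" "0 \<le> t"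
  shows "x + t *\<^sub>R axis j 1 \<in> nonneg_orthant"
  using assms by (auto simp: nonneg_orthant_def axis_def)

lemma has_derivative_along_axis:
  fixes f :: "real ^ 'n \<Rightarrow> real"
  assumes diff: "\<And>p. p \<in> nonneg_orthant \<Longrightarrow> f differentiable (at p within nonneg_orthant)"
    and z: "z \<in> nonneg_orthant" and \<tau>: "0 \<le> \<tau>"
  shows "((\<lambda>\<tau>. f (z + \<tau> *\<^sub>R axis j 1)) has_derivative
           (\<lambda>h. h * partial_deriv f j (z + \<tau> *\<^sub>R axis j 1))) (at \<tau> within {0..})"
proof -
  let ?D = "\<lambda>p. frechet_derivative f (at p within nonneg_orthant)"
  have D: "(f has_derivative ?D p) (at p within nonneg_orthant)" if "p \<in> nonneg_orthant" for p
    using diff[OF that] frechet_derivative_works by blast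
  have "((\<lambda>\<tau>. f (z + \<tau> *\<^sub>R axis j 1)) has_derivative
           (\<lambda>h. ?D (z + \<tau> *\<^sub>R axis j 1) (h *\<^sub>R axis j 1))) (at \<tau> within {0..})"
  proof (rule has_derivative_in_compose2[OF D])
    show "(\<lambda>\<tau>. z + \<tau> *\<^sub>R axis j 1) ` {0..} \<subseteq> nonneg_orthant"
      using z nonneg_orthant_add_axis by auto
    show "((\<lambda>\<tau>. z + \<tau> *\<^sub>R axis j 1) has_derivative (\<lambda>h. h *\<^sub>R axis j 1)) (at \<tau> within {0..})"
      by (auto intro!: derivative_eq_intros)
  qed (use \<tau> in auto)
  moreover have "linear (?D (z + \<tau> *\<^sub>R axis j 1))"
    using D[OF nonneg_orthant_add_axis[OF z \<tau>]] has_derivative_linear by blast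
  ultimately show ?thesis
    unfolding partial_deriv_def by (simp add: linear_scale)
qed

lemma axis_increment_eq_if_partial_deriv_eq:
  fixes f :: "real ^ 'n \<Rightarrow> real"
  assumes diff: "\<And>p. p \<in> nonneg_orthant \<Longrightarrow> f differentiable (at p within nonneg_orthant)"
    and partial_eq: "\<And>p q. p \<in> nonneg_orthant \<Longrightarrow> q \<in> nonneg_orthant \<Longrightarrow>
                   p $ j = q $ j \<Longrightarrow> partial_deriv f j p = partial_deriv f j q"
    and x: "x \<in> nonneg_orthant" and y: "y \<in> nonneg_orthant" and xy: "x $ j = y $ j"
    and h: "0 \<le> h"
  shows "f (x + h *\<^sub>R axis j 1) - f x = f (y + h *\<^sub>R axis j 1) - f y"
proof -
  have "\<exists>C. \<forall>\<tau>\<in>{0::real..}. f (x + \<tau> *\<^sub>R axis j 1) - f (y + \<tau> *\<^sub>R axis j 1) = C"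
  proof (rule has_derivative_zero_constant)
    fix \<tau> :: real assume "\<tau> \<in> {0..}"
    then have \<tau>: "0 \<le> \<tau>" by simp
    have "partial_deriv f j (x + \<tau> *\<^sub>R axis j 1) = partial_deriv f j (y + \<tau> *\<^sub>R axis j 1)"
      by (rule partial_eq) (simp_all add: nonneg_orthant_add_axis x y \<tau> xy)
    then show "((\<lambda>\<tau>. f (x + \<tau> *\<^sub>R axis j 1) - f (y + \<tau> *\<^sub>R axis j 1)) has_derivative (\<lambda>h. 0))
        (at \<tau> within {0..})"
      using has_derivative_diff[OF has_derivative_along_axis[OF diff x \<tau>, of j]
                                   has_derivative_along_axis[OF diff y \<tau>, of j]]
      by simp
  qed simp
  then obtain C where "\<And>\<tau>. 0 \<le> \<tau> \<Longrightarrow> f (x + \<tau> *\<^sub>R axis j 1) - f (y + \<tau> *\<^sub>R axis j 1) = C"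
    by auto
  from this[OF h] this[of 0] show ?thesis by simp
qed

lemma concave_on_increment_antimono:
  fixes f :: "'a::real_vector \<Rightarrow> real"
  assumes f: "concave_on S f" and x: "x \<in> S" and y: "x + (d + h) *\<^sub>R v \<in> S"
    and d: "0 \<le> d" and h: "0 \<le> h"
  shows "f (x + (d + h) *\<^sub>R v) - f (x + d *\<^sub>R v) \<le> f (x + h *\<^sub>R v) - f x"
proof (cases "d + h = 0")
  case True
  with d h have "d = 0" "h = 0" by simp_all
  then show ?thesis by simp
next
  case False
  with d h have dh: "0 < d + h" by simp
  define l where "l = d / (d + h)"
  have l: "0 \<le> l" "l \<le> 1" "l * (d + h) = d" "(1 - l) * (d + h) = h"
    using d h dh by (auto simp: l_def field_simps)
  have "(1 - l) * f x + l * f (x + (d + h) *\<^sub>R v) \<le> f ((1 - l) *\<^sub>R x + l *\<^sub>R (x + (d + h) *\<^sub>R v))"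
    by (rule concave_onD[OF f l(1,2) x y])
  also have "(1 - l) *\<^sub>R x + l *\<^sub>R (x + (d + h) *\<^sub>R v) = x + (l * (d + h)) *\<^sub>R v"
    by (simp add: algebra_simps)
  finally have left: "(1 - l) * f x + l * f (x + (d + h) *\<^sub>R v) \<le> f (x + d *\<^sub>R v)"
    unfolding l(3) .
  have "(1 - l) * f (x + (d + h) *\<^sub>R v) + l * f x \<le> f ((1 - l) *\<^sub>R (x + (d + h) *\<^sub>R v) + l *\<^sub>R x)"
    by (rule concave_onD[OF f l(1,2) y x])
  also have "(1 - l) *\<^sub>R (x + (d + h) *\<^sub>R v) + l *\<^sub>R x = x + ((1 - l) * (d + h)) *\<^sub>R v"
    by (simp add: algebra_simps)
  finally have right: "(1 - l) * f (x + (d + h) *\<^sub>R v) + l * f x \<le> f (x + h *\<^sub>R v)"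
    unfolding l(4) .
  from left right show ?thesis by (simp add: algebra_simps)
qed

lemma utility_diff:
  "utility a M x - utility a M y = (\<Sum>k\<in>UNIV. a k * (M k x - M k y))"
  by (simp add: utility_def sum_subtractf right_diff_distrib)

lemma utility_mono:
  assumes "\<And>k. 0 \<le> a k" and "\<And>k. M k x \<le> M k y"
  shows "utility a M x \<le> utility a M y"
  unfolding utility_def by (intro sum_mono mult_left_mono assms)

lemma utility_axis_increment_eq:
  fixes M :: "'n::finite \<Rightarrow> real ^ 'n \<Rightarrow> real"
  assumes diff: "\<And>k p. p \<in> nonneg_orthant \<Longrightarrow> M k differentiable (at p within nonneg_orthant)"
    and partial_eq: "\<And>k p q. p \<in> nonneg_orthant \<Longrightarrow> q \<in> nonneg_orthant \<Longrightarrow>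
                   p $ j = q $ j \<Longrightarrow> partial_deriv (M k) j p = partial_deriv (M k) j q"
    and "x \<in> nonneg_orthant" and "y \<in> nonneg_orthant" and "x $ j = y $ j" and "0 \<le> h"
  shows "utility a M (x + h *\<^sub>R axis j 1) - utility a M x
       = utility a M (y + h *\<^sub>R axis j 1) - utility a M y"
proof -
  have "M k (x + h *\<^sub>R axis j 1) - M k x = M k (y + h *\<^sub>R axis j 1) - M k y" for k
    using axis_increment_eq_if_partial_deriv_eq[of "M k", OF diff partial_eq assms(3-)] .
  then show ?thesis
    unfolding utility_diff by simp
qed

lemma utility_axis_increment_antimono:
  assumes "\<And>k. 0 \<le> a k" and "\<And>k. concave_on nonneg_orthant (M k)"
    and "x \<in> nonneg_orthant" and "0 \<le> d" and "0 \<le> h"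
  shows "utility a M (x + (d + h) *\<^sub>R axis j 1) - utility a M (x + d *\<^sub>R axis j 1)
       \<le> utility a M (x + h *\<^sub>R axis j 1) - utility a M x"
proof -
  have "x + (d + h) *\<^sub>R axis j 1 \<in> nonneg_orthant"
    using assms(3-5) by (intro nonneg_orthant_add_axis) simp_all
  with assms show ?thesis
    unfolding utility_diff
    by (intro sum_mono mult_left_mono concave_on_increment_antimono[of nonneg_orthant "M k" for k])
      simp_all
qed

lemma alloc_cost_add_axis:
  "alloc_cost c (n + t *\<^sub>R axis i 1) = alloc_cost c n + c i * t"
proof -
  have "alloc_cost c (n + t *\<^sub>R axis i 1) = (\<Sum>k\<in>UNIV. c k * n $ k + (if k = i then c k * t else 0))"
    unfolding alloc_cost_def by (rule sum.cong) (auto simp: axis_def algebra_simps)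
  then show ?thesis
    by (simp add: alloc_cost_def sum.distrib)
qed

lemma alloc_cost_mono:
  assumes "\<And>k. 0 \<le> c k" and "\<And>k. n $ k \<le> n' $ k"
  shows "alloc_cost c n \<le> alloc_cost c n'"
  unfolding alloc_cost_def by (intro sum_mono mult_left_mono assms)

definition on_grid :: "real \<Rightarrow> ('n \<Rightarrow> real) \<Rightarrow> real ^ 'n \<Rightarrow> bool" where
  "on_grid s c n \<longleftrightarrow> (\<forall>k. \<exists>m::nat. n $ k = real m * (s / c k))"

lemma on_grid_nonneg_orthant:
  assumes "0 \<le> s" and "\<And>k. 0 \<le> c k" and "on_grid s c n"
  shows "n \<in> nonneg_orthant"
  unfolding nonneg_orthant_def
proof (intro CollectI allI)
  fix k
  from assms(3) obtain m :: nat where "n $ k = real m * (s / c k)"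
    unfolding on_grid_def by blast
  with assms(1,2) show "0 \<le> n $ k" by simp
qed

lemma on_grid_change_coordinate:
  assumes "on_grid s c n" and "n' $ i = real m * (s / c i)"
    and "\<And>k. k \<noteq> i \<Longrightarrow> n' $ k = n $ k"
  shows "on_grid s c n'"
  unfolding on_grid_def
proof
  fix k
  show "\<exists>m::nat. n' $ k = real m * (s / c k)"
  proof (cases "k = i")
    case True
    with assms(2) show ?thesis by blast
  next
    case False
    with assms(1,3) show ?thesis by (simp add: on_grid_def)
  qed
qed

lemma on_grid_add_axis:
  assumes "on_grid s c n"
  shows "on_grid s c (n + (real m * (s / c i)) *\<^sub>R axis i 1)"
proof -
  from assms obtain m' :: nat where "n $ i = real m' * (s / c i)"
    unfolding on_grid_def by blast
  then have "(n + (real m * (s / c i)) *\<^sub>R axis i 1) $ i = real (m' + m) * (s / c i)"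
    by (simp add: algebra_simps)
  with assms show ?thesis
    by (rule on_grid_change_coordinate) (simp add: axis_def)
qed

lemma on_grid_diff_axis:
  assumes "0 < s" and "0 < c j" and "on_grid s c n" and "s / c j \<le> n $ j"
  shows "on_grid s c (n - (s / c j) *\<^sub>R axis j 1)"
proof -
  from assms(3) obtain m :: nat where m: "n $ j = real m * (s / c j)"
    unfolding on_grid_def by blast
  have h: "0 < s / c j" using assms(1,2) by simp
  from m assms(4) have "1 * (s / c j) \<le> real m * (s / c j)" by simp
  then have "1 \<le> real m" by (simp only: mult_le_cancel_right_pos[OF h])
  then have "1 \<le> m" by simp
  with m have "(n - (s / c j) *\<^sub>R axis j 1) $ j = real (m - 1) * (s / c j)"
    by (simp add: of_nat_diff left_diff_distrib diff_divide_distrib)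
  with assms(3) show ?thesis
    by (rule on_grid_change_coordinate) (simp add: axis_def)
qed

lemma alloc_cost_on_grid:
  fixes n :: "real ^ 'n"
  assumes "\<And>k. 0 < c k" and "on_grid s c n"
  obtains N :: nat where "alloc_cost c n = real N * s"
proof -
  from assms(2) obtain m :: "'n \<Rightarrow> nat" where m: "\<And>k. n $ k = real (m k) * (s / c k)"
    unfolding on_grid_def by metis
  have "alloc_cost c n = real (\<Sum>k\<in>UNIV. m k) * s"
    unfolding alloc_cost_def of_nat_sum sum_distrib_right
    using assms(1) by (intro sum.cong) (simp_all add: m less_imp_neq[symmetric])
  then show ?thesis using that by blast
qed

lemma on_grid_exists_axis_ahead:
  assumes s: "0 < s" and c_pos: "\<And>k. 0 < c k" and x: "on_grid s c x" and n: "on_grid s c n"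
    and cost_less: "alloc_cost c x < alloc_cost c n"
  obtains j where "x $ j + s / c j \<le> n $ j"
proof -
  have "\<not> (\<forall>k. n $ k \<le> x $ k)"
  proof
    assume "\<forall>k. n $ k \<le> x $ k"
    then have "alloc_cost c n \<le> alloc_cost c x"
      by (intro alloc_cost_mono) (simp_all add: c_pos less_imp_le)
    with cost_less show False by simp
  qed
  then obtain j where less: "x $ j < n $ j" by (auto simp: not_le)
  obtain p q :: nat where p: "x $ j = real p * (s / c j)" and q: "n $ j = real q * (s / c j)"
    using x n unfolding on_grid_def by meson
  have h: "0 < s / c j" using s c_pos[of j] by simp
  from less p q have "real p * (s / c j) < real q * (s / c j)" by simp
  then have "p < q" by (simp only: mult_less_cancel_right_pos[OF h] of_nat_less_iff)
  then have "real (p + 1) * (s / c j) \<le> real q * (s / c j)"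
    using h by (intro mult_right_mono) simp_all
  then have "x $ j + s / c j \<le> n $ j"
    by (simp add: p q algebra_simps add_divide_distrib)
  with that show ?thesis .
qed

lemma nonneg_orthant_alloc_cost_eq_0:
  assumes "\<And>k. 0 < c k" and "n \<in> nonneg_orthant" and "alloc_cost c n = 0"
  shows "n = 0"
proof -
  have "\<forall>k\<in>UNIV. c k * n $ k = 0"
    using assms sum_nonneg_eq_0_iff[of UNIV "\<lambda>k. c k * n $ k"]
    by (simp add: alloc_cost_def nonneg_orthant_def less_imp_le)
  with assms(1) show ?thesis
    by (simp add: vec_eq_iff less_imp_neq[symmetric])
qed

locale greedy_run =
  fixes c :: "'n::finite \<Rightarrow> real" and s :: real and U :: "real ^ 'n \<Rightarrow> real"
    and ns :: "nat \<Rightarrow> real ^ 'n" and T :: nat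
  assumes c_pos: "\<And>k. 0 < c k" and s_pos: "0 < s"
    and increment_eq: "\<And>x y j h. x \<in> nonneg_orthant \<Longrightarrow> y \<in> nonneg_orthant \<Longrightarrow>
          x $ j = y $ j \<Longrightarrow> 0 \<le> h \<Longrightarrow> U (x + h *\<^sub>R axis j 1) - U x = U (y + h *\<^sub>R axis j 1) - U y"
    and increment_antimono: "\<And>x d h j. x \<in> nonneg_orthant \<Longrightarrow> 0 \<le> d \<Longrightarrow> 0 \<le> h \<Longrightarrow>
          U (x + (d + h) *\<^sub>R axis j 1) - U (x + d *\<^sub>R axis j 1) \<le> U (x + h *\<^sub>R axis j 1) - U x"
    and init: "ns 0 = 0"
    and greedy: "\<And>t. t < T \<Longrightarrow> \<exists>i. (\<forall>i'. U (greedy_step s c (ns t) i') \<le> U (greedy_step s c (ns t) i))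
                                    \<and> ns (Suc t) = greedy_step s c (ns t) i"
begin

lemma on_grid_imp_nonneg_orthant: "on_grid s c n \<Longrightarrow> n \<in> nonneg_orthant"
  by (rule on_grid_nonneg_orthant) (auto intro: less_imp_le s_pos c_pos)

lemma greedy_on_grid_cost:
  "t \<le> T \<Longrightarrow> on_grid s c (ns t) \<and> alloc_cost c (ns t) = real t * s"
proof (induction t)
  case 0
  show ?case by (simp add: init on_grid_def alloc_cost_def)
next
  case (Suc t)
  then obtain i where i: "ns (Suc t) = greedy_step s c (ns t) i"
    using greedy[of t] by auto
  from Suc have grid: "on_grid s c (ns t)" and cost: "alloc_cost c (ns t) = real t * s"
    by simp_all
  have "on_grid s c (ns (Suc t))"
    using on_grid_add_axis[OF grid, of 1 i] by (simp add: i greedy_step_def)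
  moreover have "alloc_cost c (ns (Suc t)) = real (Suc t) * s"
    using c_pos[of i] by (simp add: i greedy_step_def alloc_cost_add_axis cost algebra_simps)
  ultimately show ?case ..
qed

lemma exchange_step:
  assumes x: "on_grid s c x" and n: "on_grid s c n" and less: "alloc_cost c x < alloc_cost c n"
  obtains j where "on_grid s c (n - (s / c j) *\<^sub>R axis j 1)"
    and "alloc_cost c (n - (s / c j) *\<^sub>R axis j 1) = alloc_cost c n - s"
    and "U n - U (n - (s / c j) *\<^sub>R axis j 1) \<le> U (x + (s / c j) *\<^sub>R axis j 1) - U x"
proof -
  obtain j where ahead: "x $ j + s / c j \<le> n $ j"
    using on_grid_exists_axis_ahead[OF s_pos c_pos x n less] .
  define h where "h = s / c j"
  define n' where "n' = n - h *\<^sub>R axis j 1"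
  define d where "d = n' $ j - x $ j"
  have h: "0 < h" using s_pos c_pos[of j] by (simp add: h_def)
  have x_orth: "x \<in> nonneg_orthant" using x by (rule on_grid_imp_nonneg_orthant)
  then have "0 \<le> x $ j" by (simp add: nonneg_orthant_def)
  with ahead have "h \<le> n $ j" by (simp add: h_def)
  then have n'_grid: "on_grid s c n'"
    unfolding n'_def h_def by (intro on_grid_diff_axis s_pos c_pos n)
  have d: "0 \<le> d" using ahead by (simp add: d_def n'_def h_def axis_def)
  have "U n - U n' = U ((x + d *\<^sub>R axis j 1) + h *\<^sub>R axis j 1) - U (x + d *\<^sub>R axis j 1)"
    using increment_eq[of n' "x + d *\<^sub>R axis j 1" j h] on_grid_imp_nonneg_orthant[OF n'_grid]
      nonneg_orthant_add_axis[OF x_orth d] h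
    by (simp add: n'_def d_def axis_def)
  also have "\<dots> \<le> U (x + h *\<^sub>R axis j 1) - U x"
    using increment_antimono[OF x_orth d, of "h" j] h by (simp add: scaleR_add_left add.assoc)
  finally have "U n - U n' \<le> U (x + h *\<^sub>R axis j 1) - U x" .
  moreover have "alloc_cost c n' = alloc_cost c n - s"
    using alloc_cost_add_axis[of c n "- h" j] c_pos[of j] by (simp add: n'_def h_def)
  ultimately show ?thesis
    using that n'_grid unfolding n'_def h_def by blast
qed

lemma greedy_optimal_at_cost:
  "t \<le> T \<Longrightarrow> on_grid s c n \<Longrightarrow> alloc_cost c n = real t * s \<Longrightarrow> U n \<le> U (ns t)"
proof (induction t arbitrary: n)
  case 0
  then have "n = 0"
    using nonneg_orthant_alloc_cost_eq_0[OF c_pos on_grid_imp_nonneg_orthant] by simp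
  then show ?case by (simp add: init)
next
  case (Suc t)
  have greedy_t: "on_grid s c (ns t)" "alloc_cost c (ns t) = real t * s"
    using greedy_on_grid_cost Suc.prems(1) by simp_all
  obtain j where n': "on_grid s c (n - (s / c j) *\<^sub>R axis j 1)"
      "alloc_cost c (n - (s / c j) *\<^sub>R axis j 1) = real t * s"
    and gain: "U n - U (n - (s / c j) *\<^sub>R axis j 1) \<le> U (ns t + (s / c j) *\<^sub>R axis j 1) - U (ns t)"
    using exchange_step[OF greedy_t(1) Suc.prems(2)] greedy_t(2) Suc.prems(3) s_pos
    by (auto simp: algebra_simps)
  have "U (n - (s / c j) *\<^sub>R axis j 1) \<le> U (ns t)"
    using Suc.IH Suc.prems(1) n' by simp
  moreover have "U (ns t + (s / c j) *\<^sub>R axis j 1) \<le> U (ns (Suc t))"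
    using greedy[of t] Suc.prems(1) by (auto simp: greedy_step_def)
  ultimately show ?case using gain by simp
qed

lemma greedy_optimal:
  assumes mono: "\<And>p q. p \<in> nonneg_orthant \<Longrightarrow> q \<in> nonneg_orthant \<Longrightarrow> (\<forall>i. p $ i \<le> q $ i) \<Longrightarrow> U p \<le> U q"
    and n: "on_grid s c n" and cost: "alloc_cost c n \<le> alloc_cost c (ns T)"
  shows "U n \<le> U (ns T)"
proof -
  fix k :: 'n \<comment> \<open>the padding may be spent on any group\<close>
  obtain N :: nat where N: "alloc_cost c n = real N * s"
    using alloc_cost_on_grid[OF c_pos n] .
  have "real N * s \<le> real T * s"
    using cost N greedy_on_grid_cost[of T] by simp
  then have "N \<le> T" using s_pos by simp
  define n2 where "n2 = n + (real (T - N) * (s / c k)) *\<^sub>R axis k 1"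
  have n2: "on_grid s c n2"
    unfolding n2_def using n by (rule on_grid_add_axis)
  have "alloc_cost c n2 = real T * s"
    using N \<open>N \<le> T\<close> c_pos[of k] unfolding n2_def alloc_cost_add_axis
    by (simp add: algebra_simps)
  then have "U n2 \<le> U (ns T)"
    using greedy_optimal_at_cost n2 by simp
  moreover have "U n \<le> U n2"
  proof (rule mono)
    show "n \<in> nonneg_orthant" "n2 \<in> nonneg_orthant"
      using n n2 by (simp_all add: on_grid_imp_nonneg_orthant)
    show "\<forall>i. n $ i \<le> n2 $ i"
      using s_pos c_pos[of k] by (simp add: n2_def axis_def)
  qed
  ultimately show ?thesis by simp
qed

end

theorem theorem4p1:
  fixes c :: "'n::finite \<Rightarrow> real" and a :: "'n \<Rightarrow> real"
    and B s :: real
    and M :: "'n \<Rightarrow> real ^ 'n \<Rightarrow> real"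
    and ns :: "nat \<Rightarrow> real ^ 'n" and T :: nat
  assumes c_pos: "\<And>k. c k > 0"
    and B_pos: "B > 0" and s_pos: "s > 0"
    and a_nonneg: "\<And>k. a k \<ge> 0"
    and M_diff: "\<And>k p. p \<in> nonneg_orthant \<Longrightarrow> M k differentiable (at p within nonneg_orthant)"
    and M_concave: "\<And>k. concave_on nonneg_orthant (M k)"
    and M_incr: "\<And>k p q. p \<in> nonneg_orthant \<Longrightarrow> q \<in> nonneg_orthant \<Longrightarrow>
                   (\<forall>i. p $ i \<le> q $ i) \<Longrightarrow> M k p \<le> M k q"
    and no_cross: "\<And>j k p q. p \<in> nonneg_orthant \<Longrightarrow> q \<in> nonneg_orthant \<Longrightarrow>
                   p $ j = q $ j \<Longrightarrow> partial_deriv (M k) j p = partial_deriv (M k) j q"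
    and greedy_init: "ns 0 = 0"
    and greedy_run: "\<And>t. t < T \<Longrightarrow> alloc_cost c (ns t) < B \<and>
                   (\<exists>i. (\<forall>i'. utility a M (greedy_step s c (ns t) i')
                                \<le> utility a M (greedy_step s c (ns t) i))
                        \<and> ns (Suc t) = greedy_step s c (ns t) i)"
    and greedy_stop: "alloc_cost c (ns T) \<ge> B"
  shows "\<forall>n. (\<forall>k. \<exists>m::nat. n $ k = real m * (s / c k)) \<and> alloc_cost c n \<le> B
             \<longrightarrow> utility a M n \<le> utility a M (ns T)"
proof -
  interpret greedy_run c s "utility a M" ns T
    by unfold_locales
      (rule c_pos s_pos greedy_init conjunct2[OF greedy_run]
         utility_axis_increment_eq[OF M_diff no_cross]
         utility_axis_increment_antimono[OF a_nonneg M_concave] | assumption)+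
  show ?thesis
  proof (intro allI impI)
    fix n :: "real ^ 'n"
    assume "(\<forall>k. \<exists>m::nat. n $ k = real m * (s / c k)) \<and> alloc_cost c n \<le> B"
    then have "on_grid s c n" and "alloc_cost c n \<le> alloc_cost c (ns T)"
      using greedy_stop by (auto simp: on_grid_def)
    then show "utility a M n \<le> utility a M (ns T)"
    proof (rule greedy_optimal[rotated])
      show "utility a M p \<le> utility a M q"
        if "p \<in> nonneg_orthant" "q \<in> nonneg_orthant" "\<forall>i. p $ i \<le> q $ i" for p q
        using M_incr[OF that] by (intro utility_mono a_nonneg)
    qed
  qed
qed

end
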